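(* For each $C>0$ and $K>1$ there exist $D=D(K,C)>C$ and $L=L(K,C)>C$ with the following property. Let $J\subseteq\mathbb Z$ be a nonempty set of consecutive integers, $p\in X$, and for each $i\in J$ let $\kappa_i$ be a $K$-contracting axis from $x_i$ to $y_i$ whose domain has length greater than $L$. Suppose $(\kappa_i)_{i\in J}$ is $C$-aligned. Then: (1) for each $i\in J$, the statements "$(\kappa_i,p)$ is $D$-aligned" and "$(p,\kappa_i)$ is $D$-aligned" cannot hold simultaneously; (2) the set $J_0=\{j\in J:(\kappa_i,p)\text{ is }D\text{-aligned for all }i\in J,\ i<j,\text{ and }(p,\kappa_i)\text{ is }D\text{-aligned for all }i\in J,\ i>j\}$ consists of either a single integer or two consecutive integers; (3) $\pi_{\bigcup_i\kappa_i}(p)$ is nonempty and contained in $\bigcup_{j\in J_0}\pi_{\kappa_j}(p)$; (4) $(\kappa_l,\kappa_m)$ is $D$-aligned for all $l,m\in J$ with $l<m$.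
   Context: $X$ is a geodesic metric space. For $A\subseteq X$, $\pi_A(z)=\{a\in A:d(z,a)=d(z,A)\}$ and $\pi_A(B)=\bigcup_{b\in B}\pi_A(b)$. $A$ is $K$-contracting if $\pi_A(z)\ne\emptyset$ for all $z$ and $d(x,y)\le d(x,A)-K$ implies $\operatorname{diam}(\pi_A(x)\cup\pi_A(y))\le K$. A $K$-quasigeodesic is a map $\gamma$ from an interval of $\mathbb R$ or a set of consecutive integers to $X$ with $|s-t|/K-K\le d(\gamma(s),\gamma(t))\le K|s-t|+K$; a $K$-contracting axis is a $K$-quasigeodesic with $K$-contracting image; projections onto a path mean onto its image. Alignment: for paths $\kappa$ from $a$ to $a'$ and $\eta$ from $b'$ to $b$, $(\kappa,\eta)$ is $C$-aligned if $\operatorname{diam}(a'\cup\pi_\kappa(\eta))<C$ and $\operatorname{diam}(b'\cup\pi_\eta(\kappa))<C$. A sequence $(\kappa_i)_{i\in J}$ of paths is $C$-aligned if $(\kappa_i,\kappa_{i+1})$ is $C$-aligned whenever $i,i+1\in J$. A point is treated as a degenerate path with both endpoints equal to itself; thus $(\kappa,p)$ is $D$-aligned iff $\operatorname{diam}(a'\cup\pi_\kappa(p))<D$ where $a'$ is the terminal point of $\kappa$, and $(p,\kappa)$ is $D$-aligned iff $\operatorname{diam}(a\cup\pi_\kappa(p))<D$ where $a$ is the initial point of $\kappa$. *)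

theory Defs
  imports "HOL-Analysis.Analysis"
begin

text \<open>The metric space X is given explicitly as a carrier M with metric d
(so that the constants D, L can be quantified before the space).\<close>

definition geodesic_space :: "'a set \<Rightarrow> ('a \<Rightarrow> 'a \<Rightarrow> real) \<Rightarrow> bool" where
  "geodesic_space M d \<longleftrightarrow> Metric_space M d \<and>
     (\<forall>x\<in>M. \<forall>y\<in>M. \<exists>g::real \<Rightarrow> 'a. g ` {0..d x y} \<subseteq> M \<and> g 0 = x \<and> g (d x y) = y \<and>
        (\<forall>s\<in>{0..d x y}. \<forall>t\<in>{0..d x y}. d (g s) (g t) = \<bar>s - t\<bar>))"

definition setdist :: "('a \<Rightarrow> 'a \<Rightarrow> real) \<Rightarrow> 'a \<Rightarrow> 'a set \<Rightarrow> real" where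
  "setdist d z A = Inf (d z ` A)"

definition proj :: "('a \<Rightarrow> 'a \<Rightarrow> real) \<Rightarrow> 'a set \<Rightarrow> 'a \<Rightarrow> 'a set" where
  "proj d A z = {a \<in> A. d z a = setdist d z A}"

definition proj_set :: "('a \<Rightarrow> 'a \<Rightarrow> real) \<Rightarrow> 'a set \<Rightarrow> 'a set \<Rightarrow> 'a set" where
  "proj_set d A B = (\<Union>b\<in>B. proj d A b)"

text \<open>diameter, valued in the extended reals (so unbounded sets have diameter \<infinity>)\<close>
definition diam :: "('a \<Rightarrow> 'a \<Rightarrow> real) \<Rightarrow> 'a set \<Rightarrow> ereal" where
  "diam d S = (SUP p\<in>S \<times> S. ereal (d (fst p) (snd p)))"

definition contracting :: "'a set \<Rightarrow> ('a \<Rightarrow> 'a \<Rightarrow> real) \<Rightarrow> real \<Rightarrow> 'a set \<Rightarrow> bool" where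
  "contracting M d K A \<longleftrightarrow>
     (\<forall>z\<in>M. proj d A z \<noteq> {}) \<and>
     (\<forall>x\<in>M. \<forall>y\<in>M. d x y \<le> setdist d x A - K \<longrightarrow>
        diam d (proj d A x \<union> proj d A y) \<le> ereal K)"

definition path_domain :: "real set \<Rightarrow> real \<Rightarrow> real \<Rightarrow> bool" where
  "path_domain I a b \<longleftrightarrow> a \<le> b \<and>
     (I = {a..b} \<or> (a \<in> \<int> \<and> b \<in> \<int> \<and> I = {a..b} \<inter> \<int>))"

definition quasigeodesic :: "('a \<Rightarrow> 'a \<Rightarrow> real) \<Rightarrow> real \<Rightarrow> (real \<Rightarrow> 'a) \<Rightarrow> real set \<Rightarrow> bool" where
  "quasigeodesic d K \<gamma> I \<longleftrightarrow>
     (\<forall>s\<in>I. \<forall>t\<in>I. \<bar>s - t\<bar> / K - K \<le> d (\<gamma> s) (\<gamma> t) \<and> d (\<gamma> s) (\<gamma> t) \<le> K * \<bar>s - t\<bar> + K)"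

definition contracting_axis ::
  "'a set \<Rightarrow> ('a \<Rightarrow> 'a \<Rightarrow> real) \<Rightarrow> real \<Rightarrow> (real \<Rightarrow> 'a) \<Rightarrow> real set \<Rightarrow> real \<Rightarrow> real \<Rightarrow> bool" where
  "contracting_axis M d K \<gamma> I a b \<longleftrightarrow>
     path_domain I a b \<and> \<gamma> ` I \<subseteq> M \<and> quasigeodesic d K \<gamma> I \<and> contracting M d K (\<gamma> ` I)"

text \<open>A path is represented for alignment purposes by (image, initial point, terminal point).\<close>
type_synonym 'a pth = "'a set \<times> 'a \<times> 'a"

definition axis_path :: "(real \<Rightarrow> 'a) \<Rightarrow> real set \<Rightarrow> real \<Rightarrow> real \<Rightarrow> 'a pth" where
  "axis_path \<gamma> I a b = (\<gamma> ` I, \<gamma> a, \<gamma> b)"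

definition point_path :: "'a \<Rightarrow> 'a pth" where
  "point_path p = ({p}, p, p)"

definition aligned :: "('a \<Rightarrow> 'a \<Rightarrow> real) \<Rightarrow> real \<Rightarrow> 'a pth \<Rightarrow> 'a pth \<Rightarrow> bool" where
  "aligned d C \<kappa> \<eta> \<longleftrightarrow>
     (case \<kappa> of (A, a, a') \<Rightarrow> case \<eta> of (B, b', b) \<Rightarrow>
        diam d (insert a' (proj_set d A B)) < ereal C \<and>
        diam d (insert b' (proj_set d B A)) < ereal C)"

definition consecutive_ints :: "int set \<Rightarrow> bool" where
  "consecutive_ints J \<longleftrightarrow> (\<forall>i\<in>J. \<forall>j\<in>J. \<forall>k. i \<le> k \<and> k \<le> j \<longrightarrow> k \<in> J)"

end

theory Submission
  imports Defs
begin

text \<open>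
  The basic estimate is a bounded projection property of a \<open>K\<close>-contracting set \<open>A\<close> in a
  geodesic space: if \<open>x, y\<close> project to \<open>a, b\<close> with \<open>d a b > 2K\<close>, then
  \<open>d(x,A) + d(a,b) + d(y,A) \<le> d(x,y) + 12K\<close>. It is proved by walking along a geodesic from
  \<open>x\<close> to \<open>y\<close> in steps of length \<open>d(\<cdot>,A) - K\<close>, each of which moves the projection by at
  most \<open>K\<close>.

  For a \<open>C\<close>-aligned chain of long contracting axes, this estimate shows by induction on
  \<open>m - l\<close> that \<open>\<kappa>\<^sub>m\<close> projects onto \<open>\<kappa>\<^sub>l\<close> near the end of \<open>\<kappa>\<^sub>l\<close>, which gives (4).
  For the point \<open>p\<close> it shows that whenever \<open>(\<kappa>\<^sub>i, p)\<close> is not aligned, the distance from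
  \<open>p\<close> grows by at least 1 from \<open>\<kappa>\<^sub>i\<close> to \<open>\<kappa>\<^sub>i\<^sub>+\<^sub>1\<close>, and symmetrically. The remaining
  claims are then combinatorics of integer intervals: the indices with \<open>(\<kappa>\<^sub>i, p)\<close> aligned form
  an initial segment, those with \<open>(p, \<kappa>\<^sub>i)\<close> aligned a final segment, and the distance from
  \<open>p\<close> strictly decreases towards the gap between them, where it attains its minimum.
\<close>

lemma real_measure_induct [case_names step]:
  fixes f :: "'b \<Rightarrow> real"
  assumes "0 < K"
    and step: "\<And>x. (\<And>y. 0 \<le> f y \<Longrightarrow> f y \<le> f x - K \<Longrightarrow> P y) \<Longrightarrow> P x"
  shows "P x"
proof (induction x rule: measure_induct_rule[where f = "\<lambda>x. nat \<lceil>f x / K\<rceil>"])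
  case (less x)
  show ?case
  proof (rule step)
    fix y assume "0 \<le> f y" "f y \<le> f x - K"
    then have "0 \<le> f y / K" "f y / K \<le> f x / K - 1"
      using \<open>0 < K\<close> by (simp_all add: field_simps)
    then have "nat \<lceil>f y / K\<rceil> < nat \<lceil>f x / K\<rceil>"
      by linarith
    then show "P y" by (rule less)
  qed
qed

lemma consecutive_intsD: "consecutive_ints J \<Longrightarrow> i \<in> J \<Longrightarrow> k \<in> J \<Longrightarrow> i \<le> j \<Longrightarrow> j \<le> k \<Longrightarrow> j \<in> J"
  unfolding consecutive_ints_def by blast

lemma dist_le_diam: "p \<in> S \<Longrightarrow> q \<in> S \<Longrightarrow> ereal (d p q) \<le> diam d S"
  unfolding diam_def by (rule SUP_upper2[of "(p, q)"]) auto

lemma dist_less_if_diam_less: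
  assumes "diam d S < ereal B" "p \<in> S" "q \<in> S"
  shows "d p q < B"
proof -
  have "ereal (d p q) \<le> diam d S" using assms(2,3) by (rule dist_le_diam)
  then have "ereal (d p q) < ereal B" using assms(1) by (rule le_less_trans)
  then show ?thesis by simp
qed

lemma diam_le: "(\<And>p q. p \<in> S \<Longrightarrow> q \<in> S \<Longrightarrow> d p q \<le> B) \<Longrightarrow> diam d S \<le> ereal B"
  unfolding diam_def by (rule SUP_least) auto

lemma proj_memD: "a \<in> proj d A z \<Longrightarrow> a \<in> A"
  unfolding proj_def by blast

lemma dist_proj: "a \<in> proj d A z \<Longrightarrow> d z a = setdist d z A"
  unfolding proj_def by blast

lemma proj_set_point: "proj_set d A {p} = proj d A p"
  unfolding proj_set_def by simp

lemma proj_set_onto_point: "B \<noteq> {} \<Longrightarrow> proj_set d {p} B = {p}"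
  unfolding proj_set_def proj_def setdist_def by auto

lemma aligned_imp_proj_close:
  assumes "aligned d C (A, a, a') (B, b', b)"
  shows "z \<in> B \<Longrightarrow> w \<in> proj d A z \<Longrightarrow> d w a' < C"
    and "z \<in> A \<Longrightarrow> w \<in> proj d B z \<Longrightarrow> d w b' < C"
  using assms unfolding aligned_def proj_set_def
  by (auto intro: dist_less_if_diam_less)

definition geodesic_segment :: "'a set \<Rightarrow> ('a \<Rightarrow> 'a \<Rightarrow> real) \<Rightarrow> (real \<Rightarrow> 'a) \<Rightarrow> real \<Rightarrow> bool" where
  "geodesic_segment M d g l \<longleftrightarrow>
     g ` {0..l} \<subseteq> M \<and> (\<forall>s\<in>{0..l}. \<forall>t\<in>{0..l}. d (g s) (g t) = \<bar>s - t\<bar>)"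

lemma geodesic_spaceE:
  assumes "geodesic_space M d" "x \<in> M" "y \<in> M"
  obtains g where "geodesic_segment M d g (d x y)" "g 0 = x" "g (d x y) = y"
  using assms unfolding geodesic_space_def geodesic_segment_def by blast

context Metric_space
begin

lemma setdist_le: "a \<in> A \<Longrightarrow> setdist d z A \<le> d z a"
  unfolding setdist_def by (rule cInf_lower) (auto intro: bdd_belowI[where m = 0])

lemma setdist_greatest: "A \<noteq> {} \<Longrightarrow> (\<And>a. a \<in> A \<Longrightarrow> c \<le> d z a) \<Longrightarrow> c \<le> setdist d z A"
  unfolding setdist_def by (rule cInf_greatest) auto

lemma setdist_nonneg: "A \<noteq> {} \<Longrightarrow> 0 \<le> setdist d z A"
  by (rule setdist_greatest) auto

lemma setdist_le_dist_plus_setdist: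
  assumes "A \<subseteq> M" "A \<noteq> {}" "z \<in> M" "w \<in> M"
  shows "setdist d z A \<le> d z w + setdist d w A"
proof -
  have "setdist d z A - d z w \<le> setdist d w A"
  proof (rule setdist_greatest[OF \<open>A \<noteq> {}\<close>])
    fix a assume "a \<in> A"
    then have "setdist d z A \<le> d z a" by (rule setdist_le)
    also have "\<dots> \<le> d z w + d w a" using assms \<open>a \<in> A\<close> by (intro triangle) auto
    finally show "setdist d z A - d z w \<le> d w a" by simp
  qed
  then show ?thesis by simp
qed

lemma setdist_self:
  assumes "a \<in> A" "A \<subseteq> M"
  shows "setdist d a A = 0"
proof -
  have "setdist d a A \<le> d a a" using assms(1) by (rule setdist_le)
  moreover have "d a a = 0" using assms by auto
  ultimately show ?thesis using assms setdist_nonneg[of A a] by auto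
qed

lemma proj_self: "a \<in> A \<Longrightarrow> A \<subseteq> M \<Longrightarrow> a \<in> proj d A a"
  unfolding proj_def using setdist_self[of a A] by auto

lemma diam_insert_less:
  assumes "y \<in> M" "S \<subseteq> M" "0 \<le> B" "2 * B < D" and close: "\<And>w. w \<in> S \<Longrightarrow> d w y \<le> B"
  shows "diam d (insert y S) < ereal D"
proof -
  have "d p q \<le> 2 * B" if "p \<in> insert y S" "q \<in> insert y S" for p q
  proof -
    have "d p y \<le> B" "d y q \<le> B" using that close \<open>y \<in> M\<close> \<open>0 \<le> B\<close> commute[of y q] by auto
    moreover have "d p q \<le> d p y + d y q" using that assms(1,2) by (intro triangle) auto
    ultimately show ?thesis by simp
  qed
  then have "diam d (insert y S) \<le> ereal (2 * B)" by (rule diam_le)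
  also have "\<dots> < ereal D" using \<open>2 * B < D\<close> by simp
  finally show ?thesis .
qed

lemma diam_point: "p \<in> M \<Longrightarrow> diam d {p} = ereal 0"
  unfolding diam_def by simp

lemma aligned_point_right_iff:
  assumes "p \<in> M" "B \<noteq> {}" "0 < D"
  shows "aligned d D (B, a, a') (point_path p) \<longleftrightarrow> diam d (insert a' (proj d B p)) < ereal D"
  using assms diam_point[OF assms(1)] proj_set_onto_point[OF assms(2)]
  unfolding aligned_def point_path_def by (simp add: proj_set_point)

lemma aligned_point_left_iff:
  assumes "p \<in> M" "B \<noteq> {}" "0 < D"
  shows "aligned d D (point_path p) (B, a, a') \<longleftrightarrow> diam d (insert a (proj d B p)) < ereal D"
  using assms diam_point[OF assms(1)] proj_set_onto_point[OF assms(2)]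
  unfolding aligned_def point_path_def by (simp add: proj_set_point)

lemma proj_UN_eq:
  assumes "j \<in> J" "\<And>i. i \<in> J \<Longrightarrow> setdist d p (A j) \<le> setdist d p (A i)" "a \<in> proj d (A j) p"
  shows "proj d (\<Union>i\<in>J. A i) p = (\<Union>i\<in>{i \<in> J. setdist d p (A i) = setdist d p (A j)}. proj d (A i) p)"
proof -
  have setdist_U: "setdist d p (\<Union>i\<in>J. A i) = setdist d p (A j)"
  proof (rule antisym)
    have "a \<in> (\<Union>i\<in>J. A i)" using assms(1) proj_memD[OF assms(3)] by blast
    then have "setdist d p (\<Union>i\<in>J. A i) \<le> d p a" by (rule setdist_le)
    then show "setdist d p (\<Union>i\<in>J. A i) \<le> setdist d p (A j)" using dist_proj[OF assms(3)] by simp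
    show "setdist d p (A j) \<le> setdist d p (\<Union>i\<in>J. A i)"
    proof (rule setdist_greatest)
      show "(\<Union>i\<in>J. A i) \<noteq> {}" using \<open>a \<in> (\<Union>i\<in>J. A i)\<close> by blast
      fix u assume "u \<in> (\<Union>i\<in>J. A i)"
      then obtain i where "i \<in> J" "u \<in> A i" by blast
      then show "setdist d p (A j) \<le> d p u" using assms(2)[of i] setdist_le[of u "A i" p] by simp
    qed
  qed
  show ?thesis
  proof (intro equalityI subsetI)
    fix u assume "u \<in> proj d (\<Union>i\<in>J. A i) p"
    then obtain i where "i \<in> J" "u \<in> A i" and u: "d p u = setdist d p (A j)"
      unfolding proj_def setdist_U by blast
    moreover have "setdist d p (A i) \<le> d p u" using \<open>u \<in> A i\<close> by (rule setdist_le)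
    ultimately have "setdist d p (A i) = setdist d p (A j)" using assms(2)[of i] by simp
    then show "u \<in> (\<Union>i\<in>{i \<in> J. setdist d p (A i) = setdist d p (A j)}. proj d (A i) p)"
      using \<open>i \<in> J\<close> \<open>u \<in> A i\<close> u unfolding proj_def by auto
  next
    fix u assume "u \<in> (\<Union>i\<in>{i \<in> J. setdist d p (A i) = setdist d p (A j)}. proj d (A i) p)"
    then show "u \<in> proj d (\<Union>i\<in>J. A i) p" unfolding proj_def setdist_U by auto
  qed
qed

end

locale contracting_set = Metric_space +
  fixes K :: real and A :: "'a set"
  assumes K_pos: "0 < K"
    and A_subset: "A \<subseteq> M"
    and contracting: "contracting M d K A"
begin

lemma proj_nonempty: "z \<in> M \<Longrightarrow> proj d A z \<noteq> {}"
  using contracting unfolding contracting_def by (elim conjE bspec)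

lemma obtain_proj:
  assumes "z \<in> M"
  obtains a where "a \<in> proj d A z"
  using proj_nonempty[OF assms] by blast

lemma proj_in_M: "a \<in> proj d A z \<Longrightarrow> a \<in> M"
  using A_subset by (blast dest: proj_memD)

lemma proj_close:
  assumes "x \<in> M" "y \<in> M" "d x y \<le> setdist d x A - K" "p \<in> proj d A x" "q \<in> proj d A y"
  shows "d p q \<le> K"
proof -
  have "\<forall>x\<in>M. \<forall>y\<in>M. d x y \<le> setdist d x A - K \<longrightarrow> diam d (proj d A x \<union> proj d A y) \<le> ereal K"
    using contracting unfolding contracting_def by (rule conjunct2)
  then have "diam d (proj d A x \<union> proj d A y) \<le> ereal K"
    using assms(1-3) by blast
  moreover have "ereal (d p q) \<le> diam d (proj d A x \<union> proj d A y)"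
    using assms(4,5) by (intro dist_le_diam) auto
  ultimately have "ereal (d p q) \<le> ereal K" by (rule order_trans[rotated])
  then show ?thesis by simp
qed

lemma proj_dist_le_2K:
  assumes "z \<in> M" "p \<in> proj d A z" "q \<in> proj d A z"
  shows "d p q \<le> 2 * K"
proof (cases "K \<le> setdist d z A")
  case True
  then have "d p q \<le> K" using assms by (intro proj_close) auto
  then show ?thesis using K_pos by simp
next
  case False
  have "d p q \<le> d p z + d z q" using assms proj_in_M by (intro triangle)
  also have "\<dots> = 2 * setdist d z A"
    using dist_proj[OF assms(2)] dist_proj[OF assms(3)] commute[of p z] by linarith
  finally show ?thesis using False by simp
qed

end

locale contracting_set_segment = contracting_set +
  fixes g :: "real \<Rightarrow> 'a" and l :: real
  assumes segment: "geodesic_segment M d g l"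
begin

abbreviation gap :: "real \<Rightarrow> real" where
  "gap t \<equiv> setdist d (g t) A"

lemma segment_in_M: "0 \<le> t \<Longrightarrow> t \<le> l \<Longrightarrow> g t \<in> M"
  using segment unfolding geodesic_segment_def by auto

lemma segment_dist: "0 \<le> s \<Longrightarrow> s \<le> l \<Longrightarrow> 0 \<le> t \<Longrightarrow> t \<le> l \<Longrightarrow> d (g s) (g t) = \<bar>s - t\<bar>"
  using segment unfolding geodesic_segment_def by auto

lemma gap_le:
  assumes "0 \<le> s" "s \<le> l" "0 \<le> t" "t \<le> l"
  shows "gap s \<le> \<bar>s - t\<bar> + gap t"
proof -
  obtain a where "a \<in> proj d A (g s)" using proj_nonempty[OF segment_in_M[OF assms(1,2)]] by blast
  then have "A \<noteq> {}" by (blast dest: proj_memD)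
  then have "gap s \<le> d (g s) (g t) + gap t"
    using A_subset segment_in_M[OF assms(1,2)] segment_in_M[OF assms(3,4)]
    by (intro setdist_le_dist_plus_setdist)
  then show ?thesis using segment_dist[OF assms] by simp
qed

lemma proj_close_along:
  assumes "0 \<le> s" "s \<le> l" "0 \<le> t" "t \<le> l" "\<bar>s - t\<bar> \<le> gap s - K"
    and "p \<in> proj d A (g s)" "q \<in> proj d A (g t)"
  shows "d p q \<le> K"
  using proj_close[OF segment_in_M[OF assms(1,2)] segment_in_M[OF assms(3,4)] _ assms(6,7)]
    segment_dist[OF assms(1-4)] assms(5) by simp

lemma reverse: "contracting_set_segment M d K A (\<lambda>t. g (l - t)) l"
proof -
  have "geodesic_segment M d (\<lambda>t. g (l - t)) l"
    unfolding geodesic_segment_def using segment_in_M segment_dist by (auto simp: abs_minus_commute)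
  then show ?thesis by unfold_locales
qed

text \<open>Hop from \<open>t\<close> to \<open>t + gap t - K\<close>: the projection moves by at most \<open>K\<close>, while
  \<open>gap + position\<close> grows by at least \<open>K\<close> because the new point is still \<open>2K\<close>-far from \<open>A\<close>.\<close>

lemma proj_dist_le_across_far_part:
  assumes "0 \<le> t" "t \<le> t1" "t1 \<le> l"
    and "\<And>s. t \<le> s \<Longrightarrow> s < t1 \<Longrightarrow> 2 * K < gap s"
    and "p \<in> proj d A (g t)" "q \<in> proj d A (g t1)"
  shows "d p q \<le> (gap t1 + t1) - (gap t + t) + 2 * K"
  using assms
proof (induction t arbitrary: p rule: real_measure_induct[OF K_pos, where f = "\<lambda>t. t1 - t", case_names step])
  case (step t)
  note far = step.prems(4) and p = step.prems(5)
  consider "t = t1" | "t < t1" "t1 - t \<le> gap t - K" | "t < t1" "gap t - K < t1 - t"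
    using step.prems(2) by linarith
  then show ?case
  proof cases
    case 1
    then show ?thesis using proj_dist_le_2K[OF segment_in_M] step.prems by simp
  next
    case 2
    have "d p q \<le> K" using 2 step.prems by (intro proj_close_along) auto
    moreover have "gap t \<le> (t1 - t) + gap t1" using gap_le[of t t1] step.prems 2 by simp
    ultimately show ?thesis using K_pos by linarith
  next
    case 3
    define t' where "t' = t + gap t - K"
    have "2 * K < gap t" using far 3 by simp
    then have t': "t + K < t'" "t' < t1" "\<bar>t - t'\<bar> \<le> gap t - K"
      using 3 K_pos unfolding t'_def by auto
    have "0 \<le> t'" "t' \<le> l" "t \<le> l" using t' step.prems K_pos by linarith+
    then obtain p' where p': "p' \<in> proj d A (g t')" by (blast intro: obtain_proj segment_in_M)
    have far': "2 * K < gap s" if "t' \<le> s" "s < t1" for s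
      using that t'(1) K_pos by (intro far) linarith+
    have "d p p' \<le> K"
      using step.prems(1) \<open>t \<le> l\<close> \<open>0 \<le> t'\<close> \<open>t' \<le> l\<close> t'(3) p p' by (rule proj_close_along)
    moreover have "d p' q \<le> (gap t1 + t1) - (gap t' + t') + 2 * K"
      using t' step.prems p' \<open>0 \<le> t'\<close> far' by (intro step.IH) auto
    moreover have "2 * K < gap t'" using far' t' by simp
    moreover have "d p q \<le> d p p' + d p' q"
      using p p' step.prems(6) by (intro triangle proj_in_M)
    ultimately show ?thesis unfolding t'_def by linarith
  qed
qed

lemma proj_dist_le_2K_if_short:
  assumes "0 \<le> t1" "t1 \<le> t2" "t2 \<le> l" "K \<le> gap t1" "K \<le> gap t2"
    and short: "t2 - t1 \<le> gap t1 + gap t2 - 2 * K"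
    and p: "p \<in> proj d A (g t1)" and q: "q \<in> proj d A (g t2)"
  shows "d p q \<le> 2 * K"
proof -
  define t where "t = max t1 (t2 - gap t2 + K)"
  have t: "0 \<le> t" "t \<le> l" "\<bar>t1 - t\<bar> \<le> gap t1 - K" "\<bar>t2 - t\<bar> \<le> gap t2 - K"
    using assms unfolding t_def by auto
  obtain w where w: "w \<in> proj d A (g t)" using t by (blast intro: obtain_proj segment_in_M)
  have "d p w \<le> K" using assms(1) _ t(1,2,3) p w by (rule proj_close_along) (use assms in linarith)
  moreover have "d q w \<le> K" using _ assms(3) t(1,2,4) q w by (rule proj_close_along) (use assms in linarith)
  moreover have "d p q \<le> d p w + d w q" using p w q by (intro triangle proj_in_M)
  ultimately show ?thesis using commute[of q w] by linarith
qed

text \<open>Hop inwards from both ends until the remaining piece is short enough for one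
  intermediate point to be seen from both ends within the contraction radius.\<close>

lemma proj_dist_le_far_segment:
  assumes "0 \<le> t1" "t1 \<le> t2" "t2 \<le> l"
    and "\<And>t. t1 \<le> t \<Longrightarrow> t \<le> t2 \<Longrightarrow> 2 * K < gap t"
    and "p \<in> proj d A (g t1)" "q \<in> proj d A (g t2)"
  shows "d p q \<le> max (2 * K) (t2 - t1 - gap t1 - gap t2 + 6 * K)"
  using assms
proof (induction "(t1, t2)" arbitrary: t1 t2 p q
    rule: real_measure_induct[OF K_pos, where f = "\<lambda>(t1, t2). t2 - t1", case_names step])
  case (step t1 t2)
  note far = step.prems(4) and p = step.prems(5) and q = step.prems(6)
  have "2 * K < gap t1" "2 * K < gap t2" using far step.prems(2) by auto
  show ?case
  proof (cases "t2 - t1 \<le> gap t1 + gap t2 - 2 * K")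
    case True
    have "d p q \<le> 2 * K"
      by (rule proj_dist_le_2K_if_short[OF step.prems(1-3) _ _ True p q])
        (use \<open>2 * K < gap t1\<close> \<open>2 * K < gap t2\<close> K_pos in linarith)+
    then show ?thesis by simp
  next
    case False
    define u v where "u = t1 + gap t1 - K" and "v = t2 - gap t2 + K"
    have uv: "t1 < u" "u < v" "v < t2" "v - u < t2 - t1 - 2 * K"
      "\<bar>t1 - u\<bar> \<le> gap t1 - K" "\<bar>t2 - v\<bar> \<le> gap t2 - K"
      using False \<open>2 * K < gap t1\<close> \<open>2 * K < gap t2\<close> K_pos unfolding u_def v_def by auto
    have "0 \<le> u" "u \<le> l" "0 \<le> v" "v \<le> l" "t1 \<le> l" "0 \<le> t2" using uv step.prems by linarith+
    then obtain p' q' where p': "p' \<in> proj d A (g u)" and q': "q' \<in> proj d A (g v)"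
      by (meson obtain_proj segment_in_M)
    have "d p p' \<le> K"
      using step.prems(1) \<open>t1 \<le> l\<close> \<open>0 \<le> u\<close> \<open>u \<le> l\<close> uv(5) p p' by (rule proj_close_along)
    moreover have "d q q' \<le> K"
      using \<open>0 \<le> t2\<close> step.prems(3) \<open>0 \<le> v\<close> \<open>v \<le> l\<close> uv(6) q q' by (rule proj_close_along)
    moreover have "d p' q' \<le> max (2 * K) (v - u - gap u - gap v + 6 * K)"
      using uv p' q' far K_pos \<open>0 \<le> u\<close> \<open>v \<le> l\<close> by (intro step.hyps) auto
    moreover have "2 * K < gap u" "2 * K < gap v" using far uv by auto
    moreover have "d p q \<le> d p p' + d p' q' + d q' q"
      using p p' q' q triangle[of p p' q] triangle[of p' q' q] proj_in_M by fastforce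
    ultimately show ?thesis
      using False commute[of q q'] unfolding u_def v_def by (auto simp: max_def split: if_splits)
  qed
qed

lemma first_and_last_near_points:
  assumes "0 \<le> s" "s \<le> l" "gap s \<le> 2 * K"
  obtains t1 t2 where "0 \<le> t1" "t1 \<le> t2" "t2 \<le> l" "gap t1 \<le> 2 * K" "gap t2 \<le> 2 * K"
    "\<And>t. 0 \<le> t \<Longrightarrow> t < t1 \<Longrightarrow> 2 * K < gap t" "\<And>t. t2 < t \<Longrightarrow> t \<le> l \<Longrightarrow> 2 * K < gap t"
proof -
  define S where "S = {0..l} \<inter> (\<lambda>t. gap t) -` {..2 * K}"
  have "1-lipschitz_on {0..l} (\<lambda>t. gap t)"
  proof (rule lipschitz_onI)
    fix s t assume "s \<in> {0..l}" "t \<in> {0..l}"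
    then have "gap s \<le> \<bar>s - t\<bar> + gap t" "gap t \<le> \<bar>s - t\<bar> + gap s"
      using gap_le[of s t] gap_le[of t s] by (auto simp: abs_minus_commute)
    then show "dist (gap s) (gap t) \<le> 1 * dist s t" by (simp add: dist_real_def abs_le_iff)
  qed simp
  then have "closed S"
    unfolding S_def by (intro continuous_closed_preimage lipschitz_on_continuous_on) auto
  moreover have "S \<noteq> {}" "bdd_below S" "bdd_above S"
    using assms unfolding S_def by (auto intro: bdd_belowI[where m = 0] bdd_aboveI[where M = l])
  ultimately have "Inf S \<in> S" "Sup S \<in> S" by (auto intro: closed_contains_Inf closed_contains_Sup)
  moreover have "Inf S \<le> Sup S" using \<open>S \<noteq> {}\<close> \<open>bdd_above S\<close> \<open>bdd_below S\<close> by (rule cInf_le_cSup)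
  moreover have "2 * K < gap t" if "0 \<le> t" "t < Inf S" for t
    using that cInf_lower[OF _ \<open>bdd_below S\<close>, of t] \<open>Inf S \<in> S\<close> unfolding S_def by force
  moreover have "2 * K < gap t" if "Sup S < t" "t \<le> l" for t
    using that cSup_upper[OF _ \<open>bdd_above S\<close>, of t] \<open>Sup S \<in> S\<close> unfolding S_def by force
  ultimately show thesis by (intro that[of "Inf S" "Sup S"]) (auto simp: S_def)
qed

lemma setdists_plus_proj_dist_le_near:
  assumes "0 \<le> s" "s \<le> l" "gap s \<le> 2 * K"
    and a: "a \<in> proj d A (g 0)" and b: "b \<in> proj d A (g l)"
  shows "gap 0 + d a b + gap l \<le> l + 12 * K"
proof -
  obtain t1 t2 where t: "0 \<le> t1" "t1 \<le> t2" "t2 \<le> l" "gap t1 \<le> 2 * K" "gap t2 \<le> 2 * K"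
    and far1: "\<And>t. 0 \<le> t \<Longrightarrow> t < t1 \<Longrightarrow> 2 * K < gap t"
    and far2: "\<And>t. t2 < t \<Longrightarrow> t \<le> l \<Longrightarrow> 2 * K < gap t"
    using first_and_last_near_points[OF assms(1-3)] by blast
  obtain p1 p2 where p1: "p1 \<in> proj d A (g t1)" and p2: "p2 \<in> proj d A (g t2)"
    using t by (meson obtain_proj segment_in_M order_trans)
  interpret reversed: contracting_set_segment M d K A "\<lambda>t. g (l - t)" l
    by (rule reverse)
  have "d a p1 \<le> (gap t1 + t1) - (gap 0 + 0) + 2 * K"
    using t a p1 far1 by (intro proj_dist_le_across_far_part) auto
  moreover have "d b p2 \<le> (gap t2 + (l - t2)) - (gap l + 0) + 2 * K"
    using reversed.proj_dist_le_across_far_part[of 0 "l - t2" b p2] t b p2 far2 by simp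
  moreover have "d p1 p2 \<le> gap t1 + (t2 - t1) + gap t2"
  proof -
    have "g t1 \<in> M" "g t2 \<in> M" "p1 \<in> M" "p2 \<in> M"
      using t p1 p2 by (auto intro: segment_in_M proj_in_M)
    then have "d p1 p2 \<le> d p1 (g t1) + d (g t1) (g t2) + d (g t2) p2"
      using triangle[of p1 "g t1" p2] triangle[of "g t1" "g t2" p2] by linarith
    then show ?thesis
      using dist_proj[OF p1] dist_proj[OF p2] commute[of p1 "g t1"] segment_dist[of t1 t2] t by simp
  qed
  moreover have "d a b \<le> d a p1 + d p1 p2 + d p2 b"
    using a p1 p2 b triangle[of a p1 b] triangle[of p1 p2 b] proj_in_M by fastforce
  ultimately show ?thesis using t commute[of b p2] by linarith
qed

lemma setdists_plus_proj_dist_le_segment: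
  assumes "0 \<le> l" "a \<in> proj d A (g 0)" "b \<in> proj d A (g l)" "2 * K < d a b"
  shows "gap 0 + d a b + gap l \<le> l + 12 * K"
proof (cases "\<exists>s. 0 \<le> s \<and> s \<le> l \<and> gap s \<le> 2 * K")
  case True
  then show ?thesis using assms setdists_plus_proj_dist_le_near by blast
next
  case False
  then have "d a b \<le> max (2 * K) (l - 0 - gap 0 - gap l + 6 * K)"
    using assms by (intro proj_dist_le_far_segment) force+
  then show ?thesis using assms K_pos by (simp add: max_def split: if_splits)
qed

end

context contracting_set
begin

theorem setdists_plus_proj_dist_le:
  assumes "geodesic_space M d" "x \<in> M" "y \<in> M" "a \<in> proj d A x" "b \<in> proj d A y" "2 * K < d a b"
  shows "setdist d x A + d a b + setdist d y A \<le> d x y + 12 * K"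
proof -
  obtain g where g: "geodesic_segment M d g (d x y)" "g 0 = x" "g (d x y) = y"
    using assms(1-3) by (rule geodesic_spaceE)
  interpret contracting_set_segment M d K A g "d x y"
    by unfold_locales (fact g)
  show ?thesis using setdists_plus_proj_dist_le_segment[of a b] assms g by simp
qed

end

text \<open>The combinatorial skeleton of the alignment of a point \<open>p\<close> against a chain:
  \<open>R i\<close> stands for the alignment of \<open>(\<kappa>\<^sub>i, p)\<close>, \<open>L i\<close> for that of \<open>(p, \<kappa>\<^sub>i)\<close>,
  and \<open>h i\<close> for \<open>d(p, \<kappa>\<^sub>i)\<close>.\<close>

locale alignment_pattern =
  fixes J :: "int set" and R L :: "int \<Rightarrow> bool" and h :: "int \<Rightarrow> real"
  assumes consecutive: "consecutive_ints J"
    and h_nonneg: "i \<in> J \<Longrightarrow> 0 \<le> h i"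
    and not_R_and_L: "i \<in> J \<Longrightarrow> \<not> (R i \<and> L i)"
    and R_or_L_next: "i \<in> J \<Longrightarrow> i + 1 \<in> J \<Longrightarrow> R i \<or> L (i + 1)"
    and increase_unless_R: "i \<in> J \<Longrightarrow> i + 1 \<in> J \<Longrightarrow> \<not> R i \<Longrightarrow> h i + 1 \<le> h (i + 1)"
    and decrease_unless_L: "i \<in> J \<Longrightarrow> i + 1 \<in> J \<Longrightarrow> \<not> L (i + 1) \<Longrightarrow> h (i + 1) + 1 \<le> h i"
begin

definition J0 :: "int set" where
  "J0 = {j \<in> J. (\<forall>i\<in>J. i < j \<longrightarrow> R i) \<and> (\<forall>i\<in>J. j < i \<longrightarrow> L i)}"

lemmas between = consecutive_intsD[OF consecutive]

lemma R_downward: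
  assumes "k \<in> J" "R k" "i \<le> k" "i \<in> J"
  shows "R i"
proof -
  have "i \<in> J \<longrightarrow> R i" using \<open>i \<le> k\<close>
  proof (induction i rule: int_le_induct)
    case base
    then show ?case using assms by simp
  next
    case (step i)
    show ?case
    proof
      assume "i - 1 \<in> J"
      then have "i \<in> J" using between[OF _ \<open>k \<in> J\<close>] step.hyps by simp
      then have "\<not> L i" using step.IH not_R_and_L by blast
      then show "R (i - 1)" using R_or_L_next[of "i - 1"] \<open>i - 1 \<in> J\<close> \<open>i \<in> J\<close> by simp
    qed
  qed
  then show ?thesis using \<open>i \<in> J\<close> by simp
qed

lemma L_upward:
  assumes "k \<in> J" "L k" "k \<le> i" "i \<in> J"
  shows "L i"
proof -
  have "i \<in> J \<longrightarrow> L i" using \<open>k \<le> i\<close>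
  proof (induction i rule: int_ge_induct[consumes 1])
    case base
    then show ?case using assms by simp
  next
    case (step i)
    show ?case
    proof
      assume "i + 1 \<in> J"
      then have "i \<in> J" using between[OF \<open>k \<in> J\<close>] step.hyps by simp
      then have "\<not> R i" using step.IH not_R_and_L by blast
      then show "L (i + 1)" using R_or_L_next[of i] \<open>i + 1 \<in> J\<close> \<open>i \<in> J\<close> by simp
    qed
  qed
  then show ?thesis using \<open>i \<in> J\<close> by simp
qed

lemma smaller_neighbour:
  assumes "j \<in> J" "j \<notin> J0"
  obtains i where "i \<in> J" "h i + 1 \<le> h j"
proof -
  consider (left) k where "k \<in> J" "k < j" "\<not> R k" | (right) k where "k \<in> J" "j < k" "\<not> L k"
    using assms unfolding J0_def by auto
  then show thesis
  proof cases
    case left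
    then have "j - 1 \<in> J" using between[OF _ \<open>j \<in> J\<close>] by simp
    moreover have "\<not> R (j - 1)" using left R_downward[of "j - 1" k] \<open>j - 1 \<in> J\<close> by auto
    ultimately have "h (j - 1) + 1 \<le> h j" using increase_unless_R[of "j - 1"] \<open>j \<in> J\<close> by simp
    with \<open>j - 1 \<in> J\<close> show thesis by (rule that)
  next
    case right
    then have "j + 1 \<in> J" using between[OF \<open>j \<in> J\<close>] by simp
    moreover have "\<not> L (j + 1)" using right L_upward[of "j + 1" k] \<open>j + 1 \<in> J\<close> by auto
    ultimately have "h (j + 1) + 1 \<le> h j" using decrease_unless_L[of j] \<open>j \<in> J\<close> by simp
    with \<open>j + 1 \<in> J\<close> show thesis by (rule that)
  qed
qed

lemma J0_nonempty:
  assumes "J \<noteq> {}"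
  shows "J0 \<noteq> {}"
proof -
  have "J0 \<noteq> {}" if "j \<in> J" "h j < real n" for n j
    using that
  proof (induction n arbitrary: j)
    case 0
    then show ?case using h_nonneg by force
  next
    case (Suc n)
    show ?case
    proof (cases "j \<in> J0")
      case False
      then obtain i where "i \<in> J" "h i + 1 \<le> h j" using smaller_neighbour Suc.prems(1) by blast
      then show ?thesis using Suc.prems(2) by (intro Suc.IH) auto
    qed blast
  qed
  moreover obtain j where "j \<in> J" using assms by blast
  moreover have "h j < real (Suc (nat \<lceil>h j\<rceil>))" using real_nat_ceiling_ge[of "h j"] by simp
  ultimately show ?thesis by blast
qed

lemma J0_adjacent:
  assumes "k \<in> J0" "l \<in> J0" "k < l"
  shows "l = k + 1"
proof (rule ccontr)
  assume "l \<noteq> k + 1"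
  with assms have "k + 1 \<in> J" "k + 1 < l" using between[of k l "k + 1"] unfolding J0_def by auto
  then have "R (k + 1)" "L (k + 1)" using assms unfolding J0_def by auto
  then show False using not_R_and_L \<open>k + 1 \<in> J\<close> by blast
qed

lemma J0_singleton_or_pair:
  assumes "J \<noteq> {}"
  shows "\<exists>j. J0 = {j} \<or> J0 = {j, j + 1}"
proof -
  obtain j where "j \<in> J0" using J0_nonempty[OF assms] by blast
  have "J0 \<subseteq> {j - 1 .. j + 1}"
  proof
    fix k assume "k \<in> J0"
    then show "k \<in> {j - 1 .. j + 1}"
      using J0_adjacent[of k j] J0_adjacent[of j k] \<open>j \<in> J0\<close> by (cases k j rule: linorder_cases) auto
  qed
  then have "finite J0" by (rule finite_subset) simp
  define m where "m = Min J0"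
  have "m \<in> J0" using \<open>finite J0\<close> \<open>j \<in> J0\<close> unfolding m_def by (intro Min_in) auto
  moreover have "m \<le> k" if "k \<in> J0" for k using \<open>finite J0\<close> that unfolding m_def by simp
  ultimately have "J0 \<subseteq> {m, m + 1}" using J0_adjacent[of m] by force
  with \<open>m \<in> J0\<close> show ?thesis by (cases "m + 1 \<in> J0") auto
qed

lemma minimiser_in_J0:
  assumes "j \<in> J" "\<And>i. i \<in> J \<Longrightarrow> h j \<le> h i"
  shows "j \<in> J0"
proof (rule ccontr)
  assume "j \<notin> J0"
  then obtain i where "i \<in> J" "h i + 1 \<le> h j" using smaller_neighbour \<open>j \<in> J\<close> by blast
  then show False using assms(2)[of i] by simp
qed

lemma decreasing_left_of_J0:
  assumes "j \<in> J0" "i \<in> J" "i < j"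
  shows "h (j - 1) \<le> h i"
proof -
  have "j \<in> J" using assms(1) unfolding J0_def by simp
  have "i \<le> j - 1" using \<open>i < j\<close> by simp
  then have "i \<in> J \<longrightarrow> h (j - 1) \<le> h i"
  proof (induction i rule: int_le_induct)
    case (step i)
    show ?case
    proof
      assume "i - 1 \<in> J"
      then have "i \<in> J" using between[OF _ \<open>j \<in> J\<close>] step.hyps by simp
      then have "\<not> L i" using assms(1) step.hyps not_R_and_L unfolding J0_def by auto
      then have "h i + 1 \<le> h (i - 1)" using decrease_unless_L[of "i - 1"] \<open>i - 1 \<in> J\<close> \<open>i \<in> J\<close> by simp
      then show "h (j - 1) \<le> h (i - 1)" using step.IH \<open>i \<in> J\<close> by simp
    qed
  qed simp_all
  then show ?thesis using \<open>i \<in> J\<close> by simp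
qed

lemma increasing_right_of_J0:
  assumes "j \<in> J0" "i \<in> J" "j < i"
  shows "h (j + 1) \<le> h i"
proof -
  have "j \<in> J" using assms(1) unfolding J0_def by simp
  have "j + 1 \<le> i" using \<open>j < i\<close> by simp
  then have "i \<in> J \<longrightarrow> h (j + 1) \<le> h i"
  proof (induction i rule: int_ge_induct[consumes 1])
    case (step i)
    show ?case
    proof
      assume "i + 1 \<in> J"
      then have "i \<in> J" using between[OF \<open>j \<in> J\<close>] step.hyps by simp
      then have "\<not> R i" using assms(1) step.hyps not_R_and_L unfolding J0_def by auto
      then have "h i + 1 \<le> h (i + 1)" using increase_unless_R[of i] \<open>i + 1 \<in> J\<close> \<open>i \<in> J\<close> by simp
      then show "h (j + 1) \<le> h (i + 1)" using step.IH \<open>i \<in> J\<close> by simp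
    qed
  qed simp_all
  then show ?thesis using \<open>i \<in> J\<close> by simp
qed

lemma minimiser_exists:
  assumes "J \<noteq> {}"
  obtains j where "j \<in> J" "\<And>i. i \<in> J \<Longrightarrow> h j \<le> h i"
proof -
  obtain j0 where "j0 \<in> J0" using J0_nonempty[OF assms] by blast
  define F where "F = {j0 - 1 .. j0 + 1} \<inter> J"
  have "j0 \<in> F" using \<open>j0 \<in> J0\<close> unfolding F_def J0_def by simp
  have "finite (h ` F)" unfolding F_def by simp
  moreover have "h ` F \<noteq> {}" using \<open>j0 \<in> F\<close> by blast
  ultimately have "Min (h ` F) \<in> h ` F" by (rule Min_in)
  then obtain j where "j \<in> F" and j_min: "h j = Min (h ` F)" by (metis imageE)
  have F_min: "h j \<le> h f" if "f \<in> F" for f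
    unfolding j_min using \<open>finite (h ` F)\<close> that by simp
  have F_below: "\<exists>f\<in>F. h f \<le> h i" if "i \<in> J" for i
  proof (cases i j0 rule: linorder_cases)
    case less
    then have "j0 - 1 \<in> F"
      using between[OF that, of j0 "j0 - 1"] \<open>j0 \<in> F\<close> unfolding F_def by simp
    then show ?thesis using decreasing_left_of_J0[OF \<open>j0 \<in> J0\<close> that less] by blast
  next
    case greater
    then have "j0 + 1 \<in> F"
      using between[OF _ that, of j0 "j0 + 1"] \<open>j0 \<in> F\<close> unfolding F_def by simp
    then show ?thesis using increasing_right_of_J0[OF \<open>j0 \<in> J0\<close> that greater] by blast
  qed (use \<open>j0 \<in> F\<close> in blast)
  show thesis
  proof (rule that)
    show "j \<in> J" using \<open>j \<in> F\<close> unfolding F_def by simp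
    fix i assume "i \<in> J"
    then obtain f where "f \<in> F" "h f \<le> h i" using F_below by blast
    then show "h j \<le> h i" using F_min[of f] by simp
  qed
qed

end

locale aligned_chain = Metric_space +
  fixes K C \<Lambda> :: real and J :: "int set" and A :: "int \<Rightarrow> 'a set" and x y :: "int \<Rightarrow> 'a"
  assumes geodesic: "geodesic_space M d"
    and K_pos: "0 < K" and C_pos: "0 < C"
    and consecutive: "consecutive_ints J"
    and contracting_sets: "i \<in> J \<Longrightarrow> contracting_set M d K (A i)"
    and start_mem: "i \<in> J \<Longrightarrow> x i \<in> A i"
    and end_mem: "i \<in> J \<Longrightarrow> y i \<in> A i"
    and long: "i \<in> J \<Longrightarrow> \<Lambda> \<le> d (x i) (y i)"
    and proj_next_near_end:
      "i \<in> J \<Longrightarrow> i + 1 \<in> J \<Longrightarrow> z \<in> A (i + 1) \<Longrightarrow> w \<in> proj d (A i) z \<Longrightarrow> d w (y i) < C"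
    and proj_prev_near_start:
      "i \<in> J \<Longrightarrow> i + 1 \<in> J \<Longrightarrow> z \<in> A i \<Longrightarrow> w \<in> proj d (A (i + 1)) z \<Longrightarrow> d w (x (i + 1)) < C"
begin

lemmas between = consecutive_intsD[OF consecutive]

lemma A_subset: "i \<in> J \<Longrightarrow> A i \<subseteq> M"
  by (rule contracting_set.A_subset[OF contracting_sets])

lemma mem_M: "i \<in> J \<Longrightarrow> z \<in> A i \<Longrightarrow> z \<in> M"
  using A_subset by blast

lemma proj_mem_M: "i \<in> J \<Longrightarrow> w \<in> proj d (A i) z \<Longrightarrow> w \<in> M"
  by (rule contracting_set.proj_in_M[OF contracting_sets])

lemma obtain_proj:
  assumes "i \<in> J" "z \<in> M"
  obtains w where "w \<in> proj d (A i) z"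
  using contracting_set.obtain_proj[OF contracting_sets[OF assms(1)] assms(2)] by blast

lemma setdists_plus_proj_dist_le:
  assumes "i \<in> J" "u \<in> M" "v \<in> M" "a \<in> proj d (A i) u" "b \<in> proj d (A i) v" "2 * K < d a b"
  shows "setdist d u (A i) + d a b + setdist d v (A i) \<le> d u v + 12 * K"
  using contracting_set.setdists_plus_proj_dist_le[OF contracting_sets geodesic] assms by blast

lemma mirror: "aligned_chain M d K C \<Lambda> (uminus ` J) (\<lambda>i. A (- i)) (\<lambda>i. y (- i)) (\<lambda>i. x (- i))"
proof -
  have mirrored: "k \<in> uminus ` J \<longleftrightarrow> - k \<in> J" for k
    by (metis image_iff minus_minus)
  show ?thesis
  proof unfold_locales
    show "consecutive_ints (uminus ` J)"
      unfolding consecutive_ints_def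
    proof (intro ballI allI impI)
      fix i j k assume "i \<in> uminus ` J" "j \<in> uminus ` J" "i \<le> k \<and> k \<le> j"
      then have "- k \<in> J" using between[of "- j" "- i" "- k"] unfolding mirrored by auto
      then show "k \<in> uminus ` J" unfolding mirrored .
    qed
  next
    fix i z w assume "i \<in> uminus ` J" "i + 1 \<in> uminus ` J"
    then have "- (i + 1) \<in> J" "- (i + 1) + 1 \<in> J" unfolding mirrored by simp_all
    moreover have "- (i + 1) + 1 = - i" by simp
    ultimately show "z \<in> A (- (i + 1)) \<Longrightarrow> w \<in> proj d (A (- i)) z \<Longrightarrow> d w (x (- i)) < C"
      and "z \<in> A (- i) \<Longrightarrow> w \<in> proj d (A (- (i + 1))) z \<Longrightarrow> d w (y (- (i + 1))) < C"
      using proj_prev_near_start[of "- (i + 1)" z w] proj_next_near_end[of "- (i + 1)" z w] by simp_all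
  qed (use geodesic K_pos C_pos start_mem end_mem long commute mirrored mem_M
      contracting_set.contracting[OF contracting_sets] in auto)
qed

text \<open>The projection \<open>a\<close> of \<open>w\<close> onto \<open>A (i + 1)\<close> is near \<open>x (i + 1)\<close>, hence far from \<open>b\<close>;
  the bounded projection estimate then makes \<open>w\<close> almost a closest point to \<open>a\<close> in \<open>A i\<close>,
  and the projection of \<open>a\<close> onto \<open>A i\<close> is near \<open>y i\<close>.\<close>

lemma proj_near_end_if_far_from_next_start:
  assumes i: "i \<in> J" "i + 1 \<in> J" and "z \<in> M" and b: "b \<in> proj d (A (i + 1)) z"
    and far: "C + 2 * K < d b (x (i + 1))" and w: "w \<in> proj d (A i) z"
  shows "d w (y i) \<le> 24 * K + 2 * C"
proof -
  have "w \<in> A i" "w \<in> M" using w i(1) by (auto intro: proj_memD proj_mem_M)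
  obtain a where a: "a \<in> proj d (A (i + 1)) w" using obtain_proj[OF i(2) \<open>w \<in> M\<close>] .
  obtain c where c: "c \<in> proj d (A i) a" using obtain_proj[OF i(1) proj_mem_M[OF i(2) a]] .
  have "a \<in> A (i + 1)" "a \<in> M" "b \<in> M" "c \<in> M" "x (i + 1) \<in> M" "y i \<in> M"
    using a b c i by (auto intro: proj_memD proj_mem_M mem_M start_mem end_mem)
  have "d a (x (i + 1)) < C" using proj_prev_near_start[OF i \<open>w \<in> A i\<close> a] .
  then have "2 * K < d a b"
    using far triangle[of b a "x (i + 1)"] commute[of a b] \<open>a \<in> M\<close> \<open>b \<in> M\<close> \<open>x (i + 1) \<in> M\<close>
    by linarith
  then have "setdist d w (A (i + 1)) + d a b + setdist d z (A (i + 1)) \<le> d w z + 12 * K"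
    by (rule setdists_plus_proj_dist_le[OF i(2) \<open>w \<in> M\<close> \<open>z \<in> M\<close> a b])
  moreover have "d z w \<le> d z b + d b a + d a (y i)"
  proof -
    have "d z w \<le> d z (y i)" using dist_proj[OF w] setdist_le[OF end_mem[OF i(1)]] by simp
    also have "\<dots> \<le> d z b + d b a + d a (y i)"
      using triangle[of z b "y i"] triangle[of b a "y i"] \<open>z \<in> M\<close> \<open>a \<in> M\<close> \<open>b \<in> M\<close> \<open>y i \<in> M\<close>
      by linarith
    finally show ?thesis .
  qed
  ultimately have close: "d w a \<le> d a (y i) + 12 * K"
    using dist_proj[OF a] dist_proj[OF b] commute[of w z] commute[of a b] by linarith
  have "d c (y i) < C" using proj_next_near_end[OF i \<open>a \<in> A (i + 1)\<close> c] .
  have "d c w \<le> 24 * K + C"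
  proof (cases "2 * K < d c w")
    case True
    have "w \<in> proj d (A i) w" using \<open>w \<in> A i\<close> A_subset[OF i(1)] by (rule proj_self)
    with True have "setdist d a (A i) + d c w + setdist d w (A i) \<le> d a w + 12 * K"
      using setdists_plus_proj_dist_le[OF i(1) \<open>a \<in> M\<close> \<open>w \<in> M\<close> c] by blast
    moreover have "setdist d w (A i) = 0" using \<open>w \<in> A i\<close> A_subset[OF i(1)] by (rule setdist_self)
    moreover have "d a (y i) \<le> d a c + d c (y i)" using triangle \<open>a \<in> M\<close> \<open>c \<in> M\<close> \<open>y i \<in> M\<close> by blast
    ultimately show ?thesis
      using close dist_proj[OF c] commute[of a w] \<open>d c (y i) < C\<close> by linarith
  qed (use K_pos C_pos in linarith)
  then show ?thesis
    using triangle[of w c "y i"] commute[of c w] \<open>d c (y i) < C\<close> \<open>w \<in> M\<close> \<open>c \<in> M\<close> \<open>y i \<in> M\<close>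
    by linarith
qed

lemma proj_onto_earlier_near_end:
  assumes "26 * K + 3 * C < \<Lambda>" "l \<in> J" "m \<in> J" "l < m" "z \<in> A m" "w \<in> proj d (A l) z"
  shows "d w (y l) \<le> 24 * K + 2 * C"
proof -
  have "z \<in> M" using assms(3,5) by (rule mem_M)
  have "l \<le> m - 1" using assms(4) by simp
  then have "l \<in> J \<longrightarrow> (\<forall>w \<in> proj d (A l) z. d w (y l) \<le> 24 * K + 2 * C)"
  proof (induction l rule: int_le_induct)
    case base
    show ?case using proj_next_near_end[of "m - 1" z] assms(3,5) K_pos C_pos by fastforce
  next
    case (step l)
    show ?case
    proof (intro impI ballI)
      fix w assume "l - 1 \<in> J" "w \<in> proj d (A (l - 1)) z"
      have "l \<in> J" using between[OF \<open>l - 1 \<in> J\<close> assms(3)] step.hyps by simp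
      obtain b where b: "b \<in> proj d (A l) z" using obtain_proj[OF \<open>l \<in> J\<close> \<open>z \<in> M\<close>] .
      have "b \<in> M" "x l \<in> M" "y l \<in> M" using b \<open>l \<in> J\<close> by (auto intro: proj_mem_M mem_M start_mem end_mem)
      have "d b (y l) \<le> 24 * K + 2 * C" using step.IH \<open>l \<in> J\<close> b by blast
      then have "C + 2 * K < d b (x l)"
        using long[OF \<open>l \<in> J\<close>] assms(1) triangle[of "x l" b "y l"] commute[of b "x l"]
          \<open>b \<in> M\<close> \<open>x l \<in> M\<close> \<open>y l \<in> M\<close>
        by linarith
      then show "d w (y (l - 1)) \<le> 24 * K + 2 * C"
        using proj_near_end_if_far_from_next_start[of "l - 1" z b w] \<open>l - 1 \<in> J\<close> \<open>l \<in> J\<close>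
          \<open>z \<in> M\<close> b \<open>w \<in> proj d (A (l - 1)) z\<close>
        by simp
    qed
  qed
  then show ?thesis using assms(2,6) by blast
qed

lemma proj_onto_later_near_start:
  assumes "26 * K + 3 * C < \<Lambda>" "l \<in> J" "m \<in> J" "l < m" "z \<in> A l" "w \<in> proj d (A m) z"
  shows "d w (x m) \<le> 24 * K + 2 * C"
  using aligned_chain.proj_onto_earlier_near_end[OF mirror, of "- m" "- l" z w] assms by simp

lemma setdist_next_ge:
  assumes i: "i \<in> J" "i + 1 \<in> J" and "p \<in> M" and w: "w \<in> proj d (A i) p"
    and far: "C + 2 * K \<le> d w (y i)"
  shows "setdist d p (A i) + d w (y i) \<le> setdist d p (A (i + 1)) + C + 12 * K"
proof -
  have "setdist d p (A i) + d w (y i) - C - 12 * K \<le> setdist d p (A (i + 1))"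
  proof (rule setdist_greatest)
    show "A (i + 1) \<noteq> {}" using end_mem[OF i(2)] by blast
    fix v assume "v \<in> A (i + 1)"
    with i(2) have "v \<in> M" by (rule mem_M)
    obtain c where c: "c \<in> proj d (A i) v" using obtain_proj[OF i(1) \<open>v \<in> M\<close>] .
    have "w \<in> M" "c \<in> M" "y i \<in> M" using w c i by (auto intro: proj_mem_M mem_M end_mem)
    have "d c (y i) < C" using proj_next_near_end[OF i \<open>v \<in> A (i + 1)\<close> c] .
    then have "2 * K < d w c"
      using far triangle[of w c "y i"] \<open>w \<in> M\<close> \<open>c \<in> M\<close> \<open>y i \<in> M\<close> by linarith
    then have "setdist d p (A i) + d w c + setdist d v (A i) \<le> d p v + 12 * K"
      by (rule setdists_plus_proj_dist_le[OF i(1) \<open>p \<in> M\<close> \<open>v \<in> M\<close> w c])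
    moreover have "0 \<le> setdist d v (A i)" using end_mem[OF i(1)] by (intro setdist_nonneg) blast
    moreover have "d w (y i) \<le> d w c + d c (y i)" using triangle \<open>w \<in> M\<close> \<open>c \<in> M\<close> \<open>y i \<in> M\<close> by blast
    ultimately show "setdist d p (A i) + d w (y i) - C - 12 * K \<le> d p v"
      using \<open>d c (y i) < C\<close> by linarith
  qed
  then show ?thesis by simp
qed

lemma setdist_prev_ge:
  assumes "i \<in> J" "i + 1 \<in> J" "p \<in> M" "w \<in> proj d (A (i + 1)) p" "C + 2 * K \<le> d w (x (i + 1))"
  shows "setdist d p (A (i + 1)) + d w (x (i + 1)) \<le> setdist d p (A i) + C + 12 * K"
proof -
  have J: "- (i + 1) \<in> uminus ` J" "- (i + 1) + 1 \<in> uminus ` J"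
    using assms(1,2) by (auto intro: rev_image_eqI)
  show ?thesis using aligned_chain.setdist_next_ge[OF mirror J, of p w] assms(3-5) by (simp add: add.commute)
qed

lemma aligned_later:
  assumes "26 * K + 3 * C < \<Lambda>" "48 * K + 4 * C < D" "l \<in> J" "m \<in> J" "l < m"
  shows "aligned d D (A l, x l, y l) (A m, x m, y m)"
proof -
  have "diam d (insert (y l) (proj_set d (A l) (A m))) < ereal D"
  proof (rule diam_insert_less[where B = "24 * K + 2 * C"])
    fix w assume "w \<in> proj_set d (A l) (A m)"
    then obtain z where "z \<in> A m" "w \<in> proj d (A l) z" unfolding proj_set_def by blast
    then show "d w (y l) \<le> 24 * K + 2 * C" by (rule proj_onto_earlier_near_end[OF assms(1,3-5)])
  qed (use assms K_pos C_pos end_mem mem_M proj_mem_M in \<open>auto simp: proj_set_def\<close>)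
  moreover have "diam d (insert (x m) (proj_set d (A m) (A l))) < ereal D"
  proof (rule diam_insert_less[where B = "24 * K + 2 * C"])
    fix w assume "w \<in> proj_set d (A m) (A l)"
    then obtain z where "z \<in> A l" "w \<in> proj d (A m) z" unfolding proj_set_def by blast
    then show "d w (x m) \<le> 24 * K + 2 * C" by (rule proj_onto_later_near_start[OF assms(1,3-5)])
  qed (use assms K_pos C_pos start_mem mem_M proj_mem_M in \<open>auto simp: proj_set_def\<close>)
  ultimately show ?thesis unfolding aligned_def by simp
qed

lemma point_alignment_pattern:
  assumes "p \<in> M" "48 * K + 4 * C + 2 < D" "2 * D \<le> \<Lambda>"
  shows "alignment_pattern J (\<lambda>i. aligned d D (A i, x i, y i) (point_path p))
    (\<lambda>i. aligned d D (point_path p) (A i, x i, y i)) (\<lambda>i. setdist d p (A i))"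
proof -
  have "0 < D" using assms(2) K_pos C_pos by linarith
  have proj_M: "proj d (A i) p \<subseteq> M" if "i \<in> J" for i using proj_mem_M[OF that] by blast
  have R_iff: "aligned d D (A i, x i, y i) (point_path p) \<longleftrightarrow>
      diam d (insert (y i) (proj d (A i) p)) < ereal D" if "i \<in> J" for i
    using aligned_point_right_iff[OF assms(1) _ \<open>0 < D\<close>] start_mem[OF that] by blast
  have L_iff: "aligned d D (point_path p) (A i, x i, y i) \<longleftrightarrow>
      diam d (insert (x i) (proj d (A i) p)) < ereal D" if "i \<in> J" for i
    using aligned_point_left_iff[OF assms(1) _ \<open>0 < D\<close>] start_mem[OF that] by blast
  have aligned_if_close: "diam d (insert q (proj d (A i) p)) < ereal D"
    if "i \<in> J" "q \<in> M" "\<And>w. w \<in> proj d (A i) p \<Longrightarrow> d w q \<le> 24 * K + 2 * C + 1" for i q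
  proof (rule diam_insert_less[OF that(2) proj_M[OF that(1)] _ _ that(3)])
    show "0 \<le> 24 * K + 2 * C + 1" using K_pos C_pos by linarith
    show "2 * (24 * K + 2 * C + 1) < D" using assms(2) by (simp add: algebra_simps)
  qed
  show ?thesis
  proof unfold_locales
    fix i assume "i \<in> J"
    show "0 \<le> setdist d p (A i)" using end_mem[OF \<open>i \<in> J\<close>] by (intro setdist_nonneg) blast
    show "\<not> (aligned d D (A i, x i, y i) (point_path p) \<and> aligned d D (point_path p) (A i, x i, y i))"
    proof
      obtain w where w: "w \<in> proj d (A i) p" using obtain_proj[OF \<open>i \<in> J\<close> assms(1)] .
      assume "aligned d D (A i, x i, y i) (point_path p) \<and> aligned d D (point_path p) (A i, x i, y i)"
      then have "d w (y i) < D" "d w (x i) < D"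
        using w unfolding R_iff[OF \<open>i \<in> J\<close>] L_iff[OF \<open>i \<in> J\<close>] by (auto intro: dist_less_if_diam_less)
      moreover have "d (x i) (y i) \<le> d (x i) w + d w (y i)"
        using w \<open>i \<in> J\<close> by (intro triangle) (auto intro: mem_M start_mem end_mem proj_mem_M)
      ultimately show False using long[OF \<open>i \<in> J\<close>] assms(3) commute[of w "x i"] by linarith
    qed
  next
    fix i assume i: "i \<in> J" "i + 1 \<in> J"
    show "aligned d D (A i, x i, y i) (point_path p) \<or> aligned d D (point_path p) (A (i + 1), x (i + 1), y (i + 1))"
    proof (cases "\<exists>b \<in> proj d (A (i + 1)) p. C + 2 * K < d b (x (i + 1))")
      case True
      then obtain b where "b \<in> proj d (A (i + 1)) p" "C + 2 * K < d b (x (i + 1))" by blast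
      then have "aligned d D (A i, x i, y i) (point_path p)"
        unfolding R_iff[OF i(1)] using i
        by (intro aligned_if_close) (auto dest: proj_near_end_if_far_from_next_start[OF i assms(1)]
            intro: mem_M end_mem)
      then show ?thesis ..
    next
      case False
      then have "aligned d D (point_path p) (A (i + 1), x (i + 1), y (i + 1))"
        unfolding L_iff[OF i(2)] using i K_pos C_pos
        by (intro aligned_if_close) (auto simp: not_less intro: mem_M start_mem)
      then show ?thesis ..
    qed
  next
    fix i assume i: "i \<in> J" "i + 1 \<in> J"
    show "setdist d p (A i) + 1 \<le> setdist d p (A (i + 1))"
      if not_R: "\<not> aligned d D (A i, x i, y i) (point_path p)"
    proof -
      obtain w where "w \<in> proj d (A i) p" "24 * K + 2 * C + 1 < d w (y i)"
        using not_R aligned_if_close[OF i(1) mem_M[OF i(1) end_mem[OF i(1)]]] unfolding R_iff[OF i(1)]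
        by (meson not_le)
      with setdist_next_ge[OF i assms(1)] show ?thesis using K_pos C_pos by fastforce
    qed
    show "setdist d p (A (i + 1)) + 1 \<le> setdist d p (A i)"
      if not_L: "\<not> aligned d D (point_path p) (A (i + 1), x (i + 1), y (i + 1))"
    proof -
      obtain w where "w \<in> proj d (A (i + 1)) p" "24 * K + 2 * C + 1 < d w (x (i + 1))"
        using not_L aligned_if_close[OF i(2) mem_M[OF i(2) start_mem[OF i(2)]]] unfolding L_iff[OF i(2)]
        by (meson not_le)
      with setdist_prev_ge[OF i assms(1)] show ?thesis using K_pos C_pos by fastforce
    qed
  qed (rule consecutive)
qed

theorem point_alignment_structure:
  assumes "J \<noteq> {}" "p \<in> M" "48 * K + 4 * C + 2 < D" "2 * D \<le> \<Lambda>"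
  defines "J0 \<equiv> {j \<in> J. (\<forall>i\<in>J. i < j \<longrightarrow> aligned d D (A i, x i, y i) (point_path p)) \<and>
                        (\<forall>i\<in>J. j < i \<longrightarrow> aligned d D (point_path p) (A i, x i, y i))}"
  shows "\<forall>i\<in>J. \<not> (aligned d D (A i, x i, y i) (point_path p) \<and> aligned d D (point_path p) (A i, x i, y i))"
    and "\<exists>j. J0 = {j} \<or> J0 = {j, j + 1}"
    and "proj d (\<Union>i\<in>J. A i) p \<noteq> {}"
    and "proj d (\<Union>i\<in>J. A i) p \<subseteq> (\<Union>j\<in>J0. proj d (A j) p)"
    and "\<forall>l\<in>J. \<forall>m\<in>J. l < m \<longrightarrow> aligned d D (A l, x l, y l) (A m, x m, y m)"
proof -
  interpret pattern: alignment_pattern J "\<lambda>i. aligned d D (A i, x i, y i) (point_path p)"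
    "\<lambda>i. aligned d D (point_path p) (A i, x i, y i)" "\<lambda>i. setdist d p (A i)"
    using assms(2-4) by (rule point_alignment_pattern)
  have J0: "J0 = pattern.J0" unfolding J0_def pattern.J0_def ..
  obtain j where j: "j \<in> J" "\<And>i. i \<in> J \<Longrightarrow> setdist d p (A j) \<le> setdist d p (A i)"
    using pattern.minimiser_exists[OF assms(1)] by blast
  obtain a where a: "a \<in> proj d (A j) p" using obtain_proj[OF j(1) assms(2)] .
  have U: "proj d (\<Union>i\<in>J. A i) p = (\<Union>i\<in>{i \<in> J. setdist d p (A i) = setdist d p (A j)}. proj d (A i) p)"
    using j a by (rule proj_UN_eq)
  show "\<forall>i\<in>J. \<not> (aligned d D (A i, x i, y i) (point_path p) \<and> aligned d D (point_path p) (A i, x i, y i))"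
    using pattern.not_R_and_L by blast
  show "\<exists>j. J0 = {j} \<or> J0 = {j, j + 1}" unfolding J0 using assms(1) by (rule pattern.J0_singleton_or_pair)
  show "proj d (\<Union>i\<in>J. A i) p \<noteq> {}" unfolding U using a j(1) by blast
  show "proj d (\<Union>i\<in>J. A i) p \<subseteq> (\<Union>j\<in>J0. proj d (A j) p)"
    unfolding U J0 using pattern.minimiser_in_J0 j(2) by fastforce
  show "\<forall>l\<in>J. \<forall>m\<in>J. l < m \<longrightarrow> aligned d D (A l, x l, y l) (A m, x m, y m)"
    using aligned_later assms(3,4) K_pos C_pos by simp
qed

end

lemma contracting_axisD:
  assumes "contracting_axis M d K \<gamma> I a b"
  shows "\<gamma> ` I \<subseteq> M" "contracting M d K (\<gamma> ` I)" "\<gamma> a \<in> \<gamma> ` I" "\<gamma> b \<in> \<gamma> ` I"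
    and "(b - a) / K - K \<le> d (\<gamma> a) (\<gamma> b)"
proof -
  have "a \<le> b" "a \<in> I" "b \<in> I" "quasigeodesic d K \<gamma> I"
    using assms unfolding contracting_axis_def path_domain_def by auto
  then show "(b - a) / K - K \<le> d (\<gamma> a) (\<gamma> b)" unfolding quasigeodesic_def by fastforce
  show "\<gamma> ` I \<subseteq> M" "contracting M d K (\<gamma> ` I)" using assms unfolding contracting_axis_def by simp_all
  show "\<gamma> a \<in> \<gamma> ` I" "\<gamma> b \<in> \<gamma> ` I" using \<open>a \<in> I\<close> \<open>b \<in> I\<close> by simp_all
qed

lemma aligned_chain_of_axes:
  assumes "geodesic_space M d" "0 < K" "0 < C" "consecutive_ints J"
    and axes: "\<And>i. i \<in> J \<Longrightarrow> contracting_axis M d K (\<kappa> i) (Dom i) (s i) (e i)"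
    and long: "\<And>i. i \<in> J \<Longrightarrow> K * (\<Lambda> + K) < e i - s i"
    and aligned: "\<And>i. i \<in> J \<Longrightarrow> i + 1 \<in> J \<Longrightarrow>
      aligned d C (axis_path (\<kappa> i) (Dom i) (s i) (e i)) (axis_path (\<kappa> (i + 1)) (Dom (i + 1)) (s (i + 1)) (e (i + 1)))"
  shows "aligned_chain M d K C \<Lambda> J (\<lambda>i. \<kappa> i ` Dom i) (\<lambda>i. \<kappa> i (s i)) (\<lambda>i. \<kappa> i (e i))"
proof -
  have "Metric_space M d" using assms(1) unfolding geodesic_space_def by blast
  show ?thesis
  proof (intro aligned_chain.intro aligned_chain_axioms.intro)
    fix i assume "i \<in> J"
    show "contracting_set M d K (\<kappa> i ` Dom i)"
      using \<open>Metric_space M d\<close> contracting_axisD(1,2)[OF axes[OF \<open>i \<in> J\<close>]] \<open>0 < K\<close>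
      by (intro contracting_set.intro contracting_set_axioms.intro)
    show "\<kappa> i (s i) \<in> \<kappa> i ` Dom i" "\<kappa> i (e i) \<in> \<kappa> i ` Dom i"
      using contracting_axisD(3,4)[OF axes[OF \<open>i \<in> J\<close>]] .
    have "\<Lambda> + K < (e i - s i) / K" using long[OF \<open>i \<in> J\<close>] \<open>0 < K\<close> by (simp add: field_simps)
    then show "\<Lambda> \<le> d (\<kappa> i (s i)) (\<kappa> i (e i))" using contracting_axisD(5)[OF axes[OF \<open>i \<in> J\<close>]] by simp
  next
    fix i z w assume "i \<in> J" "i + 1 \<in> J"
    then show "z \<in> \<kappa> (i + 1) ` Dom (i + 1) \<Longrightarrow> w \<in> proj d (\<kappa> i ` Dom i) z \<Longrightarrow> d w (\<kappa> i (e i)) < C"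
      and "z \<in> \<kappa> i ` Dom i \<Longrightarrow> w \<in> proj d (\<kappa> (i + 1) ` Dom (i + 1)) z \<Longrightarrow> d w (\<kappa> (i + 1) (s (i + 1))) < C"
      using aligned_imp_proj_close[OF aligned[unfolded axis_path_def]] by blast+
  qed (use assms \<open>Metric_space M d\<close> in simp_all)
qed

lemma contracting_axes_alignment:
  assumes "geodesic_space M d" "0 < K" "0 < C" "48 * K + 4 * C + 2 < D"
    and "J \<noteq> {}" "consecutive_ints J" "p \<in> M"
    and "\<And>i. i \<in> J \<Longrightarrow> contracting_axis M d K (\<kappa> i) (Dom i) (s i) (e i)"
    and "\<And>i. i \<in> J \<Longrightarrow> K * (2 * D + K) < e i - s i"
    and "\<And>i. i \<in> J \<Longrightarrow> i + 1 \<in> J \<Longrightarrow> aligned d C (axis_path (\<kappa> i) (Dom i) (s i) (e i))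
           (axis_path (\<kappa> (i + 1)) (Dom (i + 1)) (s (i + 1)) (e (i + 1)))"
  shows "let P = (\<lambda>i. axis_path (\<kappa> i) (Dom i) (s i) (e i));
            J0 = {j \<in> J. (\<forall>i\<in>J. i < j \<longrightarrow> aligned d D (P i) (point_path p)) \<and>
                          (\<forall>i\<in>J. j < i \<longrightarrow> aligned d D (point_path p) (P i))};
            U = (\<Union>i\<in>J. \<kappa> i ` Dom i)
        in (\<forall>i\<in>J. \<not> (aligned d D (P i) (point_path p) \<and> aligned d D (point_path p) (P i))) \<and>
           (\<exists>j. J0 = {j} \<or> J0 = {j, j + 1}) \<and>
           proj d U p \<noteq> {} \<and>
           proj d U p \<subseteq> (\<Union>j\<in>J0. proj d (\<kappa> j ` Dom j) p) \<and>
           (\<forall>l\<in>J. \<forall>m\<in>J. l < m \<longrightarrow> aligned d D (P l) (P m))"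
proof -
  interpret aligned_chain M d K C "2 * D" J "\<lambda>i. \<kappa> i ` Dom i" "\<lambda>i. \<kappa> i (s i)" "\<lambda>i. \<kappa> i (e i)"
    using assms(1-3,6,8-10) by (rule aligned_chain_of_axes)
  show ?thesis
    unfolding Let_def axis_path_def using point_alignment_structure[OF assms(5,7,4)] by simp
qed

theorem proposition3p5:
  fixes C K :: real
  assumes "C > 0" and "K > 1"
  shows "\<exists>D L. D > C \<and> L > C \<and>
    (\<forall>(M :: 'a set) d (J :: int set) p (\<kappa> :: int \<Rightarrow> real \<Rightarrow> 'a) Dom s e.
       geodesic_space M d \<longrightarrow>
       J \<noteq> {} \<longrightarrow> consecutive_ints J \<longrightarrow> p \<in> M \<longrightarrow>
       (\<forall>i\<in>J. contracting_axis M d K (\<kappa> i) (Dom i) (s i) (e i) \<and> e i - s i > L) \<longrightarrow>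
       (\<forall>i\<in>J. i + 1 \<in> J \<longrightarrow>
          aligned d C (axis_path (\<kappa> i) (Dom i) (s i) (e i))
                      (axis_path (\<kappa> (i+1)) (Dom (i+1)) (s (i+1)) (e (i+1)))) \<longrightarrow>
       (let P = (\<lambda>i. axis_path (\<kappa> i) (Dom i) (s i) (e i));
            J0 = {j \<in> J. (\<forall>i\<in>J. i < j \<longrightarrow> aligned d D (P i) (point_path p)) \<and>
                          (\<forall>i\<in>J. i > j \<longrightarrow> aligned d D (point_path p) (P i))};
            U = (\<Union>i\<in>J. \<kappa> i ` Dom i)
        in (\<forall>i\<in>J. \<not> (aligned d D (P i) (point_path p) \<and> aligned d D (point_path p) (P i))) \<and>
           (\<exists>j. J0 = {j} \<or> J0 = {j, j + 1}) \<and>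
           proj d U p \<noteq> {} \<and>
           proj d U p \<subseteq> (\<Union>j\<in>J0. proj d (\<kappa> j ` Dom j) p) \<and>
           (\<forall>l\<in>J. \<forall>m\<in>J. l < m \<longrightarrow> aligned d D (P l) (P m))))"
proof -
  define D where "D = 48 * K + 4 * C + 3"
  have D: "C < D" "48 * K + 4 * C + 2 < D" using assms unfolding D_def by simp_all
  moreover have "2 * D + K \<le> K * (2 * D + K)"
    using assms D mult_right_mono[of 1 K "2 * D + K"] by simp
  ultimately have L: "C < K * (2 * D + K)" using assms by linarith
  show ?thesis
    by (rule exI[of _ D], rule exI[of _ "K * (2 * D + K)"], intro conjI allI impI contracting_axes_alignment)
      (use assms D L in auto)
qed

end
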